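(* Let $K$ be a positive semiring and let $X_1,\ldots,X_m$ be an acyclic collection of finite sets of attributes. There exists a permutation $\pi$ of $[m]$ (depending only on $X_1,\ldots,X_m$) such that for every pairwise consistent collection of $K$-relations $R_1,\ldots,R_m$ with $R_i$ over $X_i$, the collection is globally consistent and the iterated left-join of $R_{\pi(1)},\ldots,R_{\pi(m)}$ witnesses its global consistency.
   Context: A commutative semiring $(K,+,\cdot,0,1)$ with $0\neq 1$ is positive if $a+b=0$ implies $a=b=0$, and $ab=0$ implies $a=0$ or $b=0$. Each attribute $A$ has a domain $\mathrm{Dom}(A)$. For a finite set of attributes $X$, $\mathrm{Tup}(X)$ is the set of maps assigning to each $A\in X$ an element of $\mathrm{Dom}(A)$; $t[Y]$ is restriction; $XY=X\cup Y$. A $K$-relation over $X$ is a map $R:\mathrm{Tup}(X)\to K$ with finite support $R'=\{t:R(t)\neq0\}$; its marginal on $Y\subseteq X$ is $R[Y](u)=\sum_{r\in R',r[Y]=u}R(r)$. $R\equiv S$ means $aR=bS$ for nonzero $a,b\in K$. $R$ over $X$ and $S$ over $Y$ are consistent if some $K$-relation $T$ over $XY$ has $R\equiv T[X]$, $S\equiv T[Y]$. A collection $R_1,\dots,R_m$ ($R_i$ over $X_i$) is pairwise consistent if every two members are consistent, and globally consistent if some $K$-relation $T$ over $X_1\cup\cdots\cup X_m$ (a witness) satisfies $R_i\equiv T[X_i]$ for all $i$. With $c_T(u)=\prod_{v\in T[Z]',v\neq u}T[Z](v)$ (empty product $1$), the join of $R$ over $X$ and $S$ over $Y$ is $(R\Join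 S)(t)=R(t[X])S(t[Y])c_S(t[X\cap Y])$ with $Z=X\cap Y$. The iterated left-join of $R_1,\ldots,R_m$ is $R_1$ if $m=1$ and $T\Join R_m$ for $m\ge2$, where $T$ is the iterated left-join of $R_1,\dots,R_{m-1}$. Acyclicity: view $X_1,\dots,X_m$ as the hyperedges of the hypergraph $H=(V,E)$ with $V=\bigcup X_i$. The reduction $R(H)$ keeps only hyperedges not properly contained in another; $H$ is reduced if $H=R(H)$. For $W\subseteq V$, $H[W]=(W,\{X\cap W:X\in E\}\setminus\{\emptyset\})$. For a reduced $H$ and distinct hyperedges $X,Y$ with $X\cap Y\neq\emptyset$, $X\cap Y$ is an articulation set if $R(H[V\setminus(X\cap Y)])$ has more connected components than $H$. A reduced $H$ is acyclic if for every $W\subseteq V$ such that $R(H[W])$ is connected with more than one hyperedge, $R(H[W])$ has an articulation set; an arbitrary $H$ is acyclic if $R(H)$ is. (This is the standard $\alpha$-acyclicity; equivalently, $H$ has a join tree / the running intersection property.) *)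

theory Defs
  imports "HOL-Combinatorics.Permutations"
begin

class positive_semiring = comm_semiring_1 +
  assumes pos_add_eq_0: "a + b = 0 \<Longrightarrow> a = 0 \<and> b = 0"
  assumes pos_mult_eq_0: "a * b = 0 \<Longrightarrow> a = 0 \<or> b = 0"
(* 0 \<noteq> 1 is part of comm_semiring_1 (zero_neq_one) *)

(* Tuples over X: partial maps from attributes to values, defined exactly on X,
   with values in the attribute domains. Restriction t[Y] is  t |` Y. *)
definition Tup :: "('a \<Rightarrow> 'd set) \<Rightarrow> 'a set \<Rightarrow> ('a \<rightharpoonup> 'd) set" where
  "Tup Dom X = {t. dom t = X \<and> (\<forall>A\<in>X. the (t A) \<in> Dom A)}"

definition krel :: "('a \<Rightarrow> 'd set) \<Rightarrow> 'a set \<Rightarrow> (('a \<rightharpoonup> 'd) \<Rightarrow> 'k::comm_semiring_1) \<Rightarrow> bool" where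
  "krel Dom X R \<longleftrightarrow> (\<forall>t. t \<notin> Tup Dom X \<longrightarrow> R t = 0) \<and> finite {t. R t \<noteq> 0}"

definition supp :: "(('a \<rightharpoonup> 'd) \<Rightarrow> 'k::comm_semiring_1) \<Rightarrow> ('a \<rightharpoonup> 'd) set" where
  "supp R = {t. R t \<noteq> 0}"

definition marg :: "(('a \<rightharpoonup> 'd) \<Rightarrow> 'k::comm_semiring_1) \<Rightarrow> 'a set \<Rightarrow> ('a \<rightharpoonup> 'd) \<Rightarrow> 'k" where
  "marg R Y u = (\<Sum>r\<in>{r\<in>supp R. r |` Y = u}. R r)"

definition krel_equiv :: "(('a \<rightharpoonup> 'd) \<Rightarrow> 'k::comm_semiring_1) \<Rightarrow> (('a \<rightharpoonup> 'd) \<Rightarrow> 'k) \<Rightarrow> bool" where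
  "krel_equiv R S \<longleftrightarrow> (\<exists>a b. a \<noteq> 0 \<and> b \<noteq> 0 \<and> (\<forall>t. a * R t = b * S t))"

definition consistent ::
  "('a \<Rightarrow> 'd set) \<Rightarrow> 'a set \<Rightarrow> (('a \<rightharpoonup> 'd) \<Rightarrow> 'k::comm_semiring_1) \<Rightarrow> 'a set \<Rightarrow> (('a \<rightharpoonup> 'd) \<Rightarrow> 'k) \<Rightarrow> bool" where
  "consistent Dom X R Y S \<longleftrightarrow>
     (\<exists>T. krel Dom (X \<union> Y) T \<and> krel_equiv R (marg T X) \<and> krel_equiv S (marg T Y))"

definition pairwise_consistent ::
  "('a \<Rightarrow> 'd set) \<Rightarrow> nat \<Rightarrow> (nat \<Rightarrow> 'a set) \<Rightarrow> (nat \<Rightarrow> ('a \<rightharpoonup> 'd) \<Rightarrow> 'k::comm_semiring_1) \<Rightarrow> bool" where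
  "pairwise_consistent Dom m X R \<longleftrightarrow>
     (\<forall>i<m. \<forall>j<m. i \<noteq> j \<longrightarrow> consistent Dom (X i) (R i) (X j) (R j))"

definition global_witness ::
  "('a \<Rightarrow> 'd set) \<Rightarrow> nat \<Rightarrow> (nat \<Rightarrow> 'a set) \<Rightarrow> (nat \<Rightarrow> ('a \<rightharpoonup> 'd) \<Rightarrow> 'k::comm_semiring_1)
     \<Rightarrow> (('a \<rightharpoonup> 'd) \<Rightarrow> 'k) \<Rightarrow> bool" where
  "global_witness Dom m X R T \<longleftrightarrow>
     krel Dom (\<Union>i<m. X i) T \<and> (\<forall>i<m. krel_equiv (R i) (marg T (X i)))"

definition globally_consistent ::
  "('a \<Rightarrow> 'd set) \<Rightarrow> nat \<Rightarrow> (nat \<Rightarrow> 'a set) \<Rightarrow> (nat \<Rightarrow> ('a \<rightharpoonup> 'd) \<Rightarrow> 'k::comm_semiring_1) \<Rightarrow> bool" where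
  "globally_consistent Dom m X R \<longleftrightarrow> (\<exists>T. global_witness Dom m X R T)"

definition cfac :: "(('a \<rightharpoonup> 'd) \<Rightarrow> 'k::comm_semiring_1) \<Rightarrow> 'a set \<Rightarrow> ('a \<rightharpoonup> 'd) \<Rightarrow> 'k" where
  "cfac S Z u = (\<Prod>v\<in>supp (marg S Z) - {u}. marg S Z v)"

definition join ::
  "('a \<Rightarrow> 'd set) \<Rightarrow> 'a set \<Rightarrow> (('a \<rightharpoonup> 'd) \<Rightarrow> 'k::comm_semiring_1) \<Rightarrow> 'a set \<Rightarrow> (('a \<rightharpoonup> 'd) \<Rightarrow> 'k)
     \<Rightarrow> ('a \<rightharpoonup> 'd) \<Rightarrow> 'k" where
  "join Dom X R Y S t =
     (if t \<in> Tup Dom (X \<union> Y)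
      then R (t |` X) * S (t |` Y) * cfac S (X \<inter> Y) (t |` (X \<inter> Y))
      else 0)"

primrec ljoin_aux ::
  "('a \<Rightarrow> 'd set) \<Rightarrow> 'a set \<Rightarrow> (('a \<rightharpoonup> 'd) \<Rightarrow> 'k::comm_semiring_1)
     \<Rightarrow> ('a set \<times> (('a \<rightharpoonup> 'd) \<Rightarrow> 'k)) list \<Rightarrow> ('a \<rightharpoonup> 'd) \<Rightarrow> 'k" where
  "ljoin_aux Dom Y T [] = T"
| "ljoin_aux Dom Y T (p # ps) = ljoin_aux Dom (Y \<union> fst p) (join Dom Y T (fst p) (snd p)) ps"

definition iter_ljoin ::
  "('a \<Rightarrow> 'd set) \<Rightarrow> ('a set \<times> (('a \<rightharpoonup> 'd) \<Rightarrow> 'k::comm_semiring_1)) list \<Rightarrow> ('a \<rightharpoonup> 'd) \<Rightarrow> 'k" where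
  "iter_ljoin Dom ps = ljoin_aux Dom (fst (hd ps)) (snd (hd ps)) (tl ps)"

(* a hypergraph is given by its edge set; its vertex set is \<Union>E
   (in all hypergraphs considered here, every vertex lies in some edge) *)
definition reduction :: "'a set set \<Rightarrow> 'a set set" where
  "reduction E = {X\<in>E. \<not> (\<exists>Y\<in>E. X \<subset> Y)}"

definition induced :: "'a set set \<Rightarrow> 'a set \<Rightarrow> 'a set set" where
  "induced E W = ((\<lambda>X. X \<inter> W) ` E) - {{}}"

definition hg_adj :: "'a set set \<Rightarrow> ('a \<times> 'a) set" where
  "hg_adj E = {(u, v). \<exists>e\<in>E. u \<in> e \<and> v \<in> e}"

definition num_components :: "'a set set \<Rightarrow> nat" where
  "num_components E = card ((\<Union>E) // ((hg_adj E)\<^sup>+))"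

definition hg_connected :: "'a set set \<Rightarrow> bool" where
  "hg_connected E \<longleftrightarrow> num_components E = 1"

definition articulation_set :: "'a set set \<Rightarrow> 'a set \<Rightarrow> bool" where
  "articulation_set E S \<longleftrightarrow>
     (\<exists>X\<in>E. \<exists>Y\<in>E. X \<noteq> Y \<and> X \<inter> Y \<noteq> {} \<and> S = X \<inter> Y) \<and>
     num_components (reduction (induced E (\<Union>E - S))) > num_components E"

definition acyclic_reduced :: "'a set set \<Rightarrow> bool" where
  "acyclic_reduced E \<longleftrightarrow>
     (\<forall>W \<subseteq> \<Union>E. hg_connected (reduction (induced E W)) \<and> card (reduction (induced E W)) > 1
        \<longrightarrow> (\<exists>S. articulation_set (reduction (induced E W)) S))"

definition hg_acyclic :: "'a set set \<Rightarrow> bool" where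
  "hg_acyclic E \<longleftrightarrow> acyclic_reduced (reduction E)"

end

(* An acyclic hypergraph has an ordering of its edges with the running intersection property:
   each edge meets the union of the earlier ones inside a single earlier edge.  Such an ordering,
   starting at any prescribed edge, is built by induction on the vertex set W: the reduced
   hypergraph induced on W either has at most one edge, or it splits, along a connected component
   or along an articulation set P \<inter> Q, into two proper parts W1, W2 whose overlap lies in one
   edge P; orderings of the two parts, the second one started at P, concatenate.

   Along such an ordering, the left join of the accumulated witness T with the next relation R_j
   only needs T and R_j to agree on the overlap of their schemas.  That overlap lies in an earlier
   schema X_k, so agreement follows from the pairwise consistency of R_k and R_j.  Positivity
   keeps the factors c_S nonzero, so the marginal of the join on the old attributes is a nonzero
   multiple of T and its marginal on X_j is equivalent to R_j. *)

theory Submission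
  imports Defs
begin

section \<open>Positive semirings and K-relations\<close>

subclass (in positive_semiring) semiring_no_zero_divisors
  by standard (use pos_mult_eq_0 in blast)

lemma sum_eq_0_iff_positive:
  fixes f :: "'b \<Rightarrow> 'k::positive_semiring"
  assumes "finite A"
  shows "sum f A = 0 \<longleftrightarrow> (\<forall>x\<in>A. f x = 0)"
  using assms by (induction A rule: finite_induct) (auto dest: pos_add_eq_0)

lemma prod_neq_0_positive:
  fixes f :: "'b \<Rightarrow> 'k::positive_semiring"
  assumes "finite A" "\<forall>x\<in>A. f x \<noteq> 0"
  shows "prod f A \<noteq> 0"
  using assms by (induction A rule: finite_induct) auto

lemma krel_equiv_refl: "krel_equiv R R"
  unfolding krel_equiv_def by (intro exI[of _ 1]) simp

lemma krel_equiv_sym: "krel_equiv R S \<Longrightarrow> krel_equiv S R"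
  unfolding krel_equiv_def by (metis (no_types))

lemma krel_equiv_trans:
  fixes R :: "('a \<rightharpoonup> 'd) \<Rightarrow> 'k::positive_semiring"
  assumes "krel_equiv R S" "krel_equiv S U"
  shows "krel_equiv R U"
proof -
  obtain a b where ab: "a \<noteq> 0" "b \<noteq> 0" "\<And>t. a * R t = b * S t"
    using assms(1) unfolding krel_equiv_def by blast
  obtain c d where cd: "c \<noteq> 0" "d \<noteq> 0" "\<And>t. c * S t = d * U t"
    using assms(2) unfolding krel_equiv_def by blast
  have "c * a * R t = b * d * U t" for t
    by (metis ab(3) cd(3) mult.assoc mult.left_commute)
  moreover have "c * a \<noteq> 0" "b * d \<noteq> 0" using ab cd by simp_all
  ultimately show ?thesis unfolding krel_equiv_def by blast
qed

lemma krel_equiv_cmult: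
  "c \<noteq> 0 \<Longrightarrow> krel_equiv R (\<lambda>t. c * R t)"
  unfolding krel_equiv_def by (intro exI[of _ c] exI[of _ 1]) simp

lemma krel_equiv_eq_0_iff:
  fixes R :: "('a \<rightharpoonup> 'd) \<Rightarrow> 'k::positive_semiring"
  assumes "krel_equiv R S"
  shows "R t = 0 \<longleftrightarrow> S t = 0"
proof -
  obtain a b where "a \<noteq> 0" "b \<noteq> 0" "a * R t = b * S t"
    using assms unfolding krel_equiv_def by blast
  then show ?thesis by (metis mult_eq_0_iff)
qed

lemma krel_finite_supp: "krel Dom X R \<Longrightarrow> finite (supp R)"
  unfolding krel_def supp_def by auto

lemma krel_supp_Tup: "krel Dom X R \<Longrightarrow> R r \<noteq> 0 \<Longrightarrow> r \<in> Tup Dom X"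
  unfolding krel_def by auto

lemma krel_supp_subset_Tup: "krel Dom X R \<Longrightarrow> supp R \<subseteq> Tup Dom X"
  unfolding supp_def using krel_supp_Tup by blast

lemma Tup_dom: "t \<in> Tup Dom X \<Longrightarrow> dom t = X"
  unfolding Tup_def by simp

lemma restrict_map_dom: "m |` dom m = m"
  by (rule ext) (simp add: restrict_map_def domIff)

lemma restrict_map_eq_mono:
  assumes "m |` X = m' |` X" "Z \<subseteq> X"
  shows "m |` Z = m' |` Z"
proof -
  have "m |` X |` Z = m' |` X |` Z" using assms(1) by simp
  then show ?thesis by (simp add: Int_absorb1[OF assms(2)])
qed

lemma restrict_map_Int_eq:
  assumes "m |` Y = r"
  shows "m |` (Y \<inter> X) = r |` (Y \<inter> X)"
proof -
  have "m |` (Y \<inter> X) = m |` Y |` (Y \<inter> X)" by simp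
  then show ?thesis by (simp only: assms)
qed

lemma marg_eq_sum_superset:
  assumes "finite F" "supp R \<subseteq> F"
  shows "marg R Y u = (\<Sum>r\<in>{r\<in>F. r |` Y = u}. R r)"
  unfolding marg_def by (rule sum.mono_neutral_left) (use assms in \<open>auto simp: supp_def\<close>)

lemma marg_cmult:
  assumes "finite (supp R)"
  shows "marg (\<lambda>t. c * R t) Y u = c * marg R Y u"
proof -
  have "supp (\<lambda>t. c * R t) \<subseteq> supp R" by (auto simp: supp_def)
  then have "marg (\<lambda>t. c * R t) Y u = (\<Sum>r\<in>{r\<in>supp R. r |` Y = u}. c * R r)"
    using marg_eq_sum_superset[OF assms] by blast
  also have "\<dots> = c * marg R Y u" unfolding marg_def by (simp add: sum_distrib_left)
  finally show ?thesis .
qed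

lemma marg_eq_0_iff:
  fixes R :: "('a \<rightharpoonup> 'd) \<Rightarrow> 'k::positive_semiring"
  assumes "finite (supp R)"
  shows "marg R Y u = 0 \<longleftrightarrow> (\<forall>r\<in>supp R. r |` Y \<noteq> u)"
  using assms unfolding marg_def by (subst sum_eq_0_iff_positive) (auto simp: supp_def)

lemma supp_marg_subset: "supp (marg T X) \<subseteq> (\<lambda>r. r |` X) ` supp T"
proof
  fix v assume "v \<in> supp (marg T X)"
  then have "marg T X v \<noteq> 0" unfolding supp_def by simp
  then have "{r \<in> supp T. r |` X = v} \<noteq> {}"
    unfolding marg_def by (rule contrapos_nn) (simp only: sum.empty)
  then show "v \<in> (\<lambda>r. r |` X) ` supp T" by blast
qed

lemma finite_supp_marg: "finite (supp T) \<Longrightarrow> finite (supp (marg T X))"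
  using supp_marg_subset finite_subset by blast

lemma marg_marg:
  assumes "finite (supp T)" "Z \<subseteq> X"
  shows "marg (marg T X) Z = marg T Z"
proof
  fix u
  let ?F = "(\<lambda>r. r |` X) ` supp T"
  have restrict: "r |` (X \<inter> Z) = r |` Z" for r :: "'a \<rightharpoonup> 'b"
    by (simp add: Int_absorb1[OF assms(2)])
  have "marg (marg T X) Z u = (\<Sum>v\<in>{v\<in>?F. v |` Z = u}. marg T X v)"
    using marg_eq_sum_superset[OF _ supp_marg_subset] assms(1) by blast
  also have "\<dots> = (\<Sum>v\<in>{v\<in>?F. v |` Z = u}. \<Sum>r\<in>{r\<in>{r\<in>supp T. r |` Z = u}. r |` X = v}. T r)"
  proof (intro sum.cong refl)
    fix v assume "v \<in> {v \<in> ?F. v |` Z = u}"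
    then have "{r \<in> {r \<in> supp T. r |` Z = u}. r |` X = v} = {r \<in> supp T. r |` X = v}"
      by (auto simp: restrict intro: restrict_map_eq_mono[OF _ assms(2)])
    then show "marg T X v = (\<Sum>r\<in>{r\<in>{r\<in>supp T. r |` Z = u}. r |` X = v}. T r)"
      unfolding marg_def by simp
  qed
  also have "\<dots> = (\<Sum>r\<in>{r\<in>supp T. r |` Z = u}. T r)"
    using assms(1) by (intro sum.group) (auto simp: restrict)
  finally show "marg (marg T X) Z u = marg T Z u" unfolding marg_def .
qed

lemma krel_equiv_marg:
  assumes "krel_equiv A B" "finite (supp A)" "finite (supp B)"
  shows "krel_equiv (marg A Z) (marg B Z)"
proof -
  obtain a b where ab: "a \<noteq> 0" "b \<noteq> 0" "(\<lambda>t. a * A t) = (\<lambda>t. b * B t)"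
    using assms(1) unfolding krel_equiv_def by auto
  have "a * marg A Z u = b * marg B Z u" for u
    using marg_cmult[OF assms(2), of a Z u] marg_cmult[OF assms(3), of b Z u] ab(3) by simp
  then show ?thesis unfolding krel_equiv_def using ab by blast
qed

lemma marg_self:
  assumes "krel Dom X R"
  shows "marg R X = R"
proof
  fix u
  have "r |` X = r" if "r \<in> supp R" for r
  proof -
    have "dom r = X" using that krel_supp_Tup[OF assms] Tup_dom unfolding supp_def by blast
    then show ?thesis using restrict_map_dom[of r] by simp
  qed
  then have "{r \<in> supp R. r |` X = u} = (if R u = 0 then {} else {u})"
    unfolding supp_def by auto
  then show "marg R X u = R u" unfolding marg_def by simp
qed

section \<open>Joins\<close>

lemma map_add_restrict_right: "dom s = X \<Longrightarrow> (r ++ s) |` X = s"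
  by (rule ext) (auto simp: restrict_map_def map_add_def split: option.split)

lemma map_add_restrict_left:
  assumes "dom r = Y" "dom s = X" "r |` (Y \<inter> X) = s |` (Y \<inter> X)"
  shows "(r ++ s) |` Y = r"
proof (rule ext)
  fix x
  have "r x = s x" if "x \<in> Y \<inter> X" using assms(3) that by (metis restrict_in)
  then show "((r ++ s) |` Y) x = r x"
    using assms(1,2) by (auto simp: restrict_map_def map_add_def dom_def split: option.split)
qed

lemma map_add_comm_compatible:
  assumes "dom r = Y" "dom s = X" "r |` (Y \<inter> X) = s |` (Y \<inter> X)"
  shows "r ++ s = s ++ r"
proof (rule ext)
  fix x
  have "r x = s x" if "x \<in> Y \<inter> X" using assms(3) that by (metis restrict_in)
  then show "(r ++ s) x = (s ++ r) x"
    using assms(1,2) by (auto simp: map_add_def dom_def split: option.split)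
qed

lemma map_add_restrict_Un: "dom t = Y \<union> X \<Longrightarrow> t |` Y ++ t |` X = t"
  by (rule ext) (auto simp: restrict_map_def map_add_def split: option.split)

lemma Tup_map_add: "r \<in> Tup Dom Y \<Longrightarrow> s \<in> Tup Dom X \<Longrightarrow> r ++ s \<in> Tup Dom (Y \<union> X)"
  unfolding Tup_def by (auto simp: map_add_def split: option.split) (metis domI option.sel)+

lemma Tup_fibre_eq_image:
  assumes r: "r \<in> Tup Dom Y" and B: "B \<subseteq> Tup Dom X"
  shows "{t \<in> Tup Dom (Y \<union> X). t |` Y = r \<and> t |` X \<in> B}
           = (\<lambda>s. r ++ s) ` {s \<in> B. s |` (Y \<inter> X) = r |` (Y \<inter> X)}"
proof (intro equalityI subsetI)
  fix t assume t: "t \<in> {t \<in> Tup Dom (Y \<union> X). t |` Y = r \<and> t |` X \<in> B}"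
  then have "dom t = Y \<union> X" using Tup_dom by blast
  then have eq: "t = r ++ t |` X" using map_add_restrict_Un[of t Y X] t by simp
  have "t |` X |` (Y \<inter> X) = t |` (Y \<inter> X)"
    by (simp add: Int_absorb1[OF Int_lower2])
  also have "\<dots> = r |` (Y \<inter> X)" using t restrict_map_Int_eq by blast
  finally show "t \<in> (\<lambda>s. r ++ s) ` {s \<in> B. s |` (Y \<inter> X) = r |` (Y \<inter> X)}"
    using eq t by blast
next
  fix t assume "t \<in> (\<lambda>s. r ++ s) ` {s \<in> B. s |` (Y \<inter> X) = r |` (Y \<inter> X)}"
  then obtain s where s: "s \<in> B" "s |` (Y \<inter> X) = r |` (Y \<inter> X)" and t: "t = r ++ s" by blast
  have s_Tup: "s \<in> Tup Dom X" using s B by blast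
  have "r ++ s \<in> Tup Dom (Y \<union> X)" using Tup_map_add[OF r s_Tup] .
  moreover have "(r ++ s) |` Y = r"
    using map_add_restrict_left[OF Tup_dom[OF r] Tup_dom[OF s_Tup] s(2)[symmetric]] .
  moreover have "(r ++ s) |` X = s" using map_add_restrict_right[OF Tup_dom[OF s_Tup]] .
  ultimately show "t \<in> {t \<in> Tup Dom (Y \<union> X). t |` Y = r \<and> t |` X \<in> B}"
    using s(1) t by simp
qed

lemma marg_eq_sum_extensions:
  assumes r: "r \<in> Tup Dom Y" and B: "finite B" "B \<subseteq> Tup Dom X"
    and F: "supp F \<subseteq> {t \<in> Tup Dom (Y \<union> X). t |` X \<in> B}"
  shows "marg F Y r = (\<Sum>s\<in>{s \<in> B. s |` (Y \<inter> X) = r |` (Y \<inter> X)}. F (r ++ s))"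
proof -
  let ?B = "{s \<in> B. s |` (Y \<inter> X) = r |` (Y \<inter> X)}"
  have "inj_on (\<lambda>s. r ++ s) ?B"
  proof (rule inj_onI)
    fix s1 s2 assume "s1 \<in> ?B" "s2 \<in> ?B" "r ++ s1 = r ++ s2"
    moreover from this have "dom s1 = X" "dom s2 = X" using B(2) Tup_dom by blast+
    ultimately show "s1 = s2" using map_add_restrict_right by metis
  qed
  moreover have "marg F Y r = sum F ((\<lambda>s. r ++ s) ` ?B)"
    unfolding marg_def
  proof (rule sum.mono_neutral_left)
    show "finite ((\<lambda>s. r ++ s) ` ?B)" using B(1) by simp
    have "{t \<in> supp F. t |` Y = r} \<subseteq> {t \<in> Tup Dom (Y \<union> X). t |` Y = r \<and> t |` X \<in> B}"
      using F by blast
    then show "{t \<in> supp F. t |` Y = r} \<subseteq> (\<lambda>s. r ++ s) ` ?B"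
      unfolding Tup_fibre_eq_image[OF r B(2)] .
    show "\<forall>t\<in>(\<lambda>s. r ++ s) ` ?B - {t \<in> supp F. t |` Y = r}. F t = 0"
      unfolding Tup_fibre_eq_image[OF r B(2), symmetric] supp_def by blast
  qed
  ultimately show ?thesis by (simp add: sum.reindex)
qed

lemma join_map_add:
  assumes "r \<in> Tup Dom Y" "s \<in> Tup Dom X" "r |` (Y \<inter> X) = s |` (Y \<inter> X)"
  shows "join Dom Y T X S (r ++ s) = T r * S s * cfac S (Y \<inter> X) (r |` (Y \<inter> X))"
proof -
  have "dom r = Y" "dom s = X" using assms(1,2) Tup_dom by blast+
  then have "(r ++ s) |` Y = r" "(r ++ s) |` X = s"
    using map_add_restrict_left assms(3) map_add_restrict_right by blast+
  moreover from this have "(r ++ s) |` (Y \<inter> X) = r |` (Y \<inter> X)"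
    by (intro restrict_map_Int_eq)
  ultimately show ?thesis
    unfolding join_def using Tup_map_add[OF assms(1,2)] by simp
qed

lemma supp_join_subset:
  "supp (join Dom Y T X S) \<subseteq> {t \<in> Tup Dom (Y \<union> X). t |` Y \<in> supp T \<and> t |` X \<in> supp S}"
  unfolding supp_def join_def by auto

lemma krel_join:
  assumes "krel Dom Y T" "krel Dom X S"
  shows "krel Dom (Y \<union> X) (join Dom Y T X S)"
proof -
  have "supp (join Dom Y T X S) \<subseteq> (\<lambda>(r, s). r ++ s) ` (supp T \<times> supp S)"
  proof
    fix t assume "t \<in> supp (join Dom Y T X S)"
    then have t: "t \<in> Tup Dom (Y \<union> X)" "t |` Y \<in> supp T" "t |` X \<in> supp S"
      using supp_join_subset by blast+
    then have "t = (\<lambda>(r, s). r ++ s) (t |` Y, t |` X)"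
      using map_add_restrict_Un[OF Tup_dom[OF t(1)]] by simp
    then show "t \<in> (\<lambda>(r, s). r ++ s) ` (supp T \<times> supp S)" using t(2,3) by blast
  qed
  moreover have "finite (supp T \<times> supp S)" using assms krel_finite_supp by blast
  ultimately have "finite (supp (join Dom Y T X S))"
    by (rule finite_subset[OF _ finite_imageI])
  then show ?thesis unfolding krel_def supp_def join_def by simp
qed

lemma marg_join_left:
  assumes T: "krel Dom Y T" and S: "krel Dom X S"
  shows "marg (join Dom Y T X S) Y r
           = T r * cfac S (Y \<inter> X) (r |` (Y \<inter> X)) * marg S (Y \<inter> X) (r |` (Y \<inter> X))"
proof (cases "T r = 0")
  case True
  then have empty: "{t \<in> supp (join Dom Y T X S). t |` Y = r} = {}"
    using supp_join_subset unfolding supp_def by blast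
  show ?thesis unfolding marg_def True empty by simp
next
  case False
  have r: "r \<in> Tup Dom Y" using krel_supp_Tup[OF T False] .
  have "marg (join Dom Y T X S) Y r = (\<Sum>s\<in>{s \<in> supp S. s |` (Y \<inter> X) = r |` (Y \<inter> X)}.
          join Dom Y T X S (r ++ s))"
    using supp_join_subset[of Dom Y T X S]
    by (intro marg_eq_sum_extensions[OF r krel_finite_supp[OF S] krel_supp_subset_Tup[OF S]]) blast
  also have "\<dots> = (\<Sum>s\<in>{s \<in> supp S. s |` (Y \<inter> X) = r |` (Y \<inter> X)}.
          T r * cfac S (Y \<inter> X) (r |` (Y \<inter> X)) * S s)"
  proof (rule sum.cong[OF refl])
    fix s assume "s \<in> {s \<in> supp S. s |` (Y \<inter> X) = r |` (Y \<inter> X)}"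
    then have "s \<in> Tup Dom X" "r |` (Y \<inter> X) = s |` (Y \<inter> X)"
      using krel_supp_subset_Tup[OF S] by auto
    then show "join Dom Y T X S (r ++ s) = T r * cfac S (Y \<inter> X) (r |` (Y \<inter> X)) * S s"
      using join_map_add[OF r, where T = T and S = S] by (simp add: mult_ac)
  qed
  finally show ?thesis unfolding marg_def by (simp add: sum_distrib_left)
qed

lemma marg_join_right:
  assumes T: "krel Dom Y T" and S: "krel Dom X S"
  shows "marg (join Dom Y T X S) X s
           = S s * cfac S (Y \<inter> X) (s |` (Y \<inter> X)) * marg T (Y \<inter> X) (s |` (Y \<inter> X))"
proof (cases "S s = 0")
  case True
  then have empty: "{t \<in> supp (join Dom Y T X S). t |` X = s} = {}"
    using supp_join_subset unfolding supp_def by blast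
  show ?thesis unfolding marg_def True empty by simp
next
  case False
  have s: "s \<in> Tup Dom X" using krel_supp_Tup[OF S False] .
  have "marg (join Dom Y T X S) X s = (\<Sum>r\<in>{r \<in> supp T. r |` (X \<inter> Y) = s |` (X \<inter> Y)}.
          join Dom Y T X S (s ++ r))"
    using supp_join_subset[of Dom Y T X S]
    by (intro marg_eq_sum_extensions[OF s krel_finite_supp[OF T] krel_supp_subset_Tup[OF T]])
      (auto simp: Un_commute)
  also have "\<dots> = (\<Sum>r\<in>{r \<in> supp T. r |` (Y \<inter> X) = s |` (Y \<inter> X)}.
          S s * cfac S (Y \<inter> X) (s |` (Y \<inter> X)) * T r)"
  proof (intro sum.cong)
    fix r assume "r \<in> {r \<in> supp T. r |` (Y \<inter> X) = s |` (Y \<inter> X)}"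
    then have r: "r \<in> Tup Dom Y" "r |` (Y \<inter> X) = s |` (Y \<inter> X)"
      using krel_supp_Tup[OF T] unfolding supp_def by auto
    then have "s ++ r = r ++ s"
      using map_add_comm_compatible[OF Tup_dom[OF r(1)] Tup_dom[OF s] r(2)] by simp
    then show "join Dom Y T X S (s ++ r) = S s * cfac S (Y \<inter> X) (s |` (Y \<inter> X)) * T r"
      using join_map_add[OF r(1) s r(2), where T = T and S = S] r(2) by (simp add: mult_ac)
  qed (simp add: Int_commute)
  finally show ?thesis unfolding marg_def by (simp add: sum_distrib_left)
qed

lemma marg_mult_cfac:
  assumes "finite (supp S)" "marg S Z u \<noteq> 0"
  shows "marg S Z u * cfac S Z u = prod (marg S Z) (supp (marg S Z))"
proof -
  have "u \<in> supp (marg S Z)" using assms(2) unfolding supp_def by simp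
  then show ?thesis
    unfolding cfac_def by (simp add: prod.remove[OF finite_supp_marg[OF assms(1)]])
qed

lemma prod_supp_marg_neq_0:
  fixes S :: "('a \<rightharpoonup> 'd) \<Rightarrow> 'k::positive_semiring"
  assumes "finite (supp S)"
  shows "prod (marg S Z) (supp (marg S Z)) \<noteq> 0"
proof (rule prod_neq_0_positive)
  show "finite (supp (marg S Z))" using finite_supp_marg[OF assms] .
qed (simp add: supp_def)

lemma marg_join_left_eq_cmult:
  fixes T S :: "('a \<rightharpoonup> 'd) \<Rightarrow> 'k::positive_semiring"
  assumes T: "krel Dom Y T" and S: "krel Dom X S"
    and eq: "krel_equiv (marg T (Y \<inter> X)) (marg S (Y \<inter> X))"
  shows "marg (join Dom Y T X S) Y = (\<lambda>r. prod (marg S (Y \<inter> X)) (supp (marg S (Y \<inter> X))) * T r)"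
proof
  fix r
  show "marg (join Dom Y T X S) Y r = prod (marg S (Y \<inter> X)) (supp (marg S (Y \<inter> X))) * T r"
  proof (cases "T r = 0")
    case True
    then show ?thesis using marg_join_left[OF T S] by simp
  next
    case False
    then have "marg T (Y \<inter> X) (r |` (Y \<inter> X)) \<noteq> 0"
      using marg_eq_0_iff krel_finite_supp[OF T] unfolding supp_def by blast
    then have "marg S (Y \<inter> X) (r |` (Y \<inter> X)) \<noteq> 0"
      using krel_equiv_eq_0_iff[OF eq] by blast
    then show ?thesis
      using marg_join_left[OF T S] marg_mult_cfac[OF krel_finite_supp[OF S]] by (simp add: mult_ac)
  qed
qed

lemma krel_equiv_marg_join_right:
  fixes T S :: "('a \<rightharpoonup> 'd) \<Rightarrow> 'k::positive_semiring"
  assumes T: "krel Dom Y T" and S: "krel Dom X S"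
    and eq: "krel_equiv (marg T (Y \<inter> X)) (marg S (Y \<inter> X))"
  shows "krel_equiv S (marg (join Dom Y T X S) X)"
proof -
  let ?Z = "Y \<inter> X"
  let ?P = "prod (marg S ?Z) (supp (marg S ?Z))"
  obtain a b where ab: "a \<noteq> 0" "b \<noteq> 0" "\<And>u. a * marg T ?Z u = b * marg S ?Z u"
    using eq unfolding krel_equiv_def by blast
  have "b * ?P * S s = a * marg (join Dom Y T X S) X s" for s
  proof (cases "S s = 0")
    case True
    then show ?thesis using marg_join_right[OF T S] by simp
  next
    case False
    then have "marg S ?Z (s |` ?Z) \<noteq> 0"
      using marg_eq_0_iff krel_finite_supp[OF S] unfolding supp_def by blast
    then have "marg S ?Z (s |` ?Z) * cfac S ?Z (s |` ?Z) = ?P"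
      using marg_mult_cfac[OF krel_finite_supp[OF S]] by blast
    then have "b * ?P * S s = S s * cfac S ?Z (s |` ?Z) * (b * marg S ?Z (s |` ?Z))"
      by (simp add: mult_ac)
    also have "\<dots> = S s * cfac S ?Z (s |` ?Z) * (a * marg T ?Z (s |` ?Z))"
      by (simp only: ab(3))
    also have "\<dots> = a * marg (join Dom Y T X S) X s"
      using marg_join_right[OF T S, of s] by (simp add: mult_ac)
    finally show ?thesis .
  qed
  moreover have "?P \<noteq> 0" using prod_supp_marg_neq_0[OF krel_finite_supp[OF S]] .
  ultimately show ?thesis unfolding krel_equiv_def using ab by (metis mult_eq_0_iff)
qed

lemma krel_equiv_marg_join_left:
  fixes T S :: "('a \<rightharpoonup> 'd) \<Rightarrow> 'k::positive_semiring"
  assumes T: "krel Dom Y T" and S: "krel Dom X S"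
    and eq: "krel_equiv (marg T (Y \<inter> X)) (marg S (Y \<inter> X))" and Z: "Z \<subseteq> Y"
  shows "krel_equiv (marg T Z) (marg (join Dom Y T X S) Z)"
proof -
  let ?P = "prod (marg S (Y \<inter> X)) (supp (marg S (Y \<inter> X)))"
  have "marg (join Dom Y T X S) Z = marg (marg (join Dom Y T X S) Y) Z"
    using marg_marg[OF krel_finite_supp[OF krel_join[OF T S]] Z] by simp
  also have "\<dots> = marg (\<lambda>r. ?P * T r) Z"
    unfolding marg_join_left_eq_cmult[OF T S eq] ..
  also have "\<dots> = (\<lambda>u. ?P * marg T Z u)"
    using marg_cmult[OF krel_finite_supp[OF T]] by blast
  finally show ?thesis
    using krel_equiv_cmult[OF prod_supp_marg_neq_0[OF krel_finite_supp[OF S]]] by simp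
qed

section \<open>Iterated joins along running intersection orders\<close>

lemma krel_equiv_marg_of_marg:
  assumes "krel_equiv R (marg T X)" "finite (supp R)" "finite (supp T)" "Z \<subseteq> X"
  shows "krel_equiv (marg R Z) (marg T Z)"
  using krel_equiv_marg[OF assms(1,2) finite_supp_marg[OF assms(3)], where Z = Z]
    marg_marg[OF assms(3,4)]
  by simp

lemma consistent_krel_equiv_marg:
  fixes R S :: "('a \<rightharpoonup> 'd) \<Rightarrow> 'k::positive_semiring"
  assumes "consistent Dom X R Y S" "krel Dom X R" "krel Dom Y S" "Z \<subseteq> X \<inter> Y"
  shows "krel_equiv (marg R Z) (marg S Z)"
proof -
  obtain T where T: "krel Dom (X \<union> Y) T" "krel_equiv R (marg T X)" "krel_equiv S (marg T Y)"
    using assms(1) unfolding consistent_def by blast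
  have "krel_equiv (marg R Z) (marg T Z)" "krel_equiv (marg S Z) (marg T Z)"
    using T assms(2-4) krel_finite_supp by (blast intro: krel_equiv_marg_of_marg)+
  then show ?thesis using krel_equiv_sym krel_equiv_trans by blast
qed

lemma consistent_self: "krel Dom X R \<Longrightarrow> consistent Dom X R X R"
  unfolding consistent_def using marg_self krel_equiv_refl by fastforce

lemma krel_equiv_marg_via_consistent:
  fixes R S :: "('a \<rightharpoonup> 'd) \<Rightarrow> 'k::positive_semiring"
  assumes "krel_equiv S (marg T X)" "finite (supp T)" "krel Dom X S" "krel Dom Y R"
    and "consistent Dom X S Y R" "Z \<subseteq> X \<inter> Y"
  shows "krel_equiv (marg T Z) (marg R Z)"
proof -
  have "krel_equiv (marg S Z) (marg T Z)"
    using assms(1-3,6) krel_finite_supp by (blast intro: krel_equiv_marg_of_marg)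
  moreover have "krel_equiv (marg S Z) (marg R Z)"
    using assms(5,3,4,6) by (rule consistent_krel_equiv_marg)
  ultimately show ?thesis using krel_equiv_sym krel_equiv_trans by blast
qed

lemma ljoin_aux_snoc:
  "ljoin_aux Dom Y T (ps @ [q])
     = join Dom (Y \<union> \<Union>(fst ` set ps)) (ljoin_aux Dom Y T ps) (fst q) (snd q)"
  by (induction ps arbitrary: Y T) (simp_all add: Un_assoc)

lemma iter_ljoin_snoc:
  assumes "L \<noteq> []"
  shows "iter_ljoin Dom (map (\<lambda>i. (X i, R i)) (L @ [j]))
           = join Dom (\<Union>(X ` set L)) (iter_ljoin Dom (map (\<lambda>i. (X i, R i)) L)) (X j) (R j)"
  using assms by (cases L) (simp_all add: iter_ljoin_def ljoin_aux_snoc image_image)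

definition running_intersection :: "('i \<Rightarrow> 'a set) \<Rightarrow> 'i list \<Rightarrow> bool" where
  "running_intersection e L \<longleftrightarrow>
     (\<forall>ys x zs. L = ys @ x # zs \<longrightarrow> ys \<noteq> [] \<longrightarrow> (\<exists>k\<in>set ys. e x \<inter> \<Union>(e ` set ys) \<subseteq> e k))"

lemma running_intersection_snoc:
  "running_intersection e (L @ [x]) \<longleftrightarrow>
     running_intersection e L \<and> (L \<noteq> [] \<longrightarrow> (\<exists>k\<in>set L. e x \<inter> \<Union>(e ` set L) \<subseteq> e k))"
    (is "?ri (L @ [x]) \<longleftrightarrow> ?ri L \<and> ?last")
proof
  assume ri: "?ri (L @ [x])"
  have "\<exists>k\<in>set ys. e y \<inter> \<Union>(e ` set ys) \<subseteq> e k" if "L = ys @ y # zs" "ys \<noteq> []" for ys y zs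
    using ri that unfolding running_intersection_def by (metis append_Cons append_assoc)
  then have "?ri L" unfolding running_intersection_def by blast
  moreover have ?last using ri unfolding running_intersection_def by blast
  ultimately show "?ri L \<and> ?last" ..
next
  assume ri: "?ri L \<and> ?last"
  show "?ri (L @ [x])" unfolding running_intersection_def
  proof (intro allI impI)
    fix ys y zs assume split: "L @ [x] = ys @ y # zs" and "ys \<noteq> []"
    show "\<exists>k\<in>set ys. e y \<inter> \<Union>(e ` set ys) \<subseteq> e k"
    proof (cases zs rule: rev_cases)
      case Nil
      then show ?thesis using split ri \<open>ys \<noteq> []\<close> by simp
    next
      case (snoc zs' z)
      then have "L = ys @ y # zs'" using split by simp
      then show ?thesis using ri \<open>ys \<noteq> []\<close> unfolding running_intersection_def by blast
    qed
  qed
qed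

lemma join_extends_witness:
  fixes R :: "'i \<Rightarrow> ('a \<rightharpoonup> 'd) \<Rightarrow> 'k::positive_semiring"
  assumes T: "krel Dom Y T" "\<forall>i\<in>I. X i \<subseteq> Y \<and> krel_equiv (R i) (marg T (X i))"
    and c: "c \<in> I" "X j \<inter> Y \<subseteq> X c" "krel Dom (X c) (R c)"
    and j: "krel Dom (X j) (R j)" "consistent Dom (X c) (R c) (X j) (R j)"
  shows "krel Dom (Y \<union> X j) (join Dom Y T (X j) (R j))"
    and "\<forall>i\<in>insert j I. krel_equiv (R i) (marg (join Dom Y T (X j) (R j)) (X i))"
proof -
  have "Y \<inter> X j \<subseteq> X c \<inter> X j" using c(2) by blast
  then have eq: "krel_equiv (marg T (Y \<inter> X j)) (marg (R j) (Y \<inter> X j))"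
    using krel_equiv_marg_via_consistent[OF conjunct2[OF T(2)[rule_format, OF c(1)]]
        krel_finite_supp[OF T(1)] c(3) j] by blast
  show "krel Dom (Y \<union> X j) (join Dom Y T (X j) (R j))" by (rule krel_join[OF T(1) j(1)])
  have "krel_equiv (R i) (marg (join Dom Y T (X j) (R j)) (X i))" if "i \<in> I" for i
    using krel_equiv_trans[OF conjunct2[OF T(2)[rule_format, OF that]]
        krel_equiv_marg_join_left[OF T(1) j(1) eq]] T(2) that by blast
  then show "\<forall>i\<in>insert j I. krel_equiv (R i) (marg (join Dom Y T (X j) (R j)) (X i))"
    using krel_equiv_marg_join_right[OF T(1) j(1) eq] by blast
qed

lemma iter_ljoin_witness:
  fixes R :: "'i \<Rightarrow> ('a \<rightharpoonup> 'd) \<Rightarrow> 'k::positive_semiring"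
  assumes "L \<noteq> []" "running_intersection X L"
    and "\<forall>i\<in>set L. krel Dom (X i) (R i)"
    and "\<forall>i\<in>set L. \<forall>j\<in>set L. i \<noteq> j \<longrightarrow> consistent Dom (X i) (R i) (X j) (R j)"
  shows "krel Dom (\<Union>(X ` set L)) (iter_ljoin Dom (map (\<lambda>i. (X i, R i)) L))
         \<and> (\<forall>i\<in>set L. krel_equiv (R i) (marg (iter_ljoin Dom (map (\<lambda>i. (X i, R i)) L)) (X i)))"
  using assms
proof (induction L rule: rev_induct)
  case (snoc j L)
  show ?case
  proof (cases "L = []")
    case True
    have "krel Dom (X j) (R j)" using snoc.prems(3) by simp
    then show ?thesis
      using True marg_self[of Dom "X j" "R j"] krel_equiv_refl[of "R j"]
      by (simp add: iter_ljoin_def)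
  next
    case False
    define Y where "Y = \<Union>(X ` set L)"
    define T where "T = iter_ljoin Dom (map (\<lambda>i. (X i, R i)) L)"
    have "krel Dom Y T" "\<forall>i\<in>set L. krel_equiv (R i) (marg T (X i))"
      using snoc False unfolding Y_def T_def by (auto simp: running_intersection_snoc)
    then have T: "krel Dom Y T" "\<forall>i\<in>set L. X i \<subseteq> Y \<and> krel_equiv (R i) (marg T (X i))"
      unfolding Y_def by blast+
    obtain c where c: "c \<in> set L" "X j \<inter> Y \<subseteq> X c"
      using snoc.prems(2) False unfolding Y_def running_intersection_snoc by blast
    have Rj: "krel Dom (X j) (R j)" and Rc: "krel Dom (X c) (R c)"
      using snoc.prems(3) c(1) by auto
    have "consistent Dom (X c) (R c) (X j) (R j)"
      using snoc.prems(4) c(1) consistent_self[OF Rj] by (cases "c = j") auto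
    note step = join_extends_witness[OF T c Rc Rj this]
    have "\<Union>(X ` set (L @ [j])) = Y \<union> X j" unfolding Y_def by auto
    then show ?thesis
      using step iter_ljoin_snoc[OF False, of Dom X R j] unfolding Y_def T_def by simp
  qed
qed simp

section \<open>Separations of acyclic hypergraphs\<close>

lemma reduction_subset: "reduction F \<subseteq> F"
  unfolding reduction_def by auto

lemma reduction_above:
  assumes "finite F" "x \<in> F"
  shows "\<exists>y\<in>reduction F. x \<subseteq> y"
proof -
  obtain y where "y \<in> F" "x \<subseteq> y" "\<forall>z\<in>F. y \<subseteq> z \<longrightarrow> y = z"
    using finite_has_maximal2[OF assms] by blast
  then show ?thesis unfolding reduction_def by blast
qed

lemma Union_reduction: "finite F \<Longrightarrow> \<Union>(reduction F) = \<Union>F"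
  using reduction_subset reduction_above by blast

lemma hg_adj_reduction:
  assumes "finite F"
  shows "hg_adj (reduction F) = hg_adj F"
proof
  show "hg_adj (reduction F) \<subseteq> hg_adj F" unfolding hg_adj_def using reduction_subset by blast
  show "hg_adj F \<subseteq> hg_adj (reduction F)"
  proof
    fix p assume "p \<in> hg_adj F"
    then obtain u v e where uv: "p = (u, v)" "u \<in> e" "v \<in> e" and e: "e \<in> F"
      unfolding hg_adj_def by blast
    obtain e' where "e' \<in> reduction F" "e \<subseteq> e'" using reduction_above[OF assms e] by blast
    with uv show "p \<in> hg_adj (reduction F)" unfolding hg_adj_def by blast
  qed
qed

lemma num_components_reduction: "finite F \<Longrightarrow> num_components (reduction F) = num_components F"
  unfolding num_components_def by (simp add: Union_reduction hg_adj_reduction)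

lemma num_components_induced_Union: "num_components (induced G (\<Union>G)) = num_components G"
proof -
  have "(\<lambda>X. X \<inter> \<Union>G) ` G = (\<lambda>X. X) ` G" by (rule image_cong) auto
  then have "induced G (\<Union>G) = G - {{}}" unfolding induced_def by simp
  moreover have "hg_adj (G - {{}}) = hg_adj G" "\<Union>(G - {{}}) = \<Union>G"
    unfolding hg_adj_def by auto
  ultimately show ?thesis unfolding num_components_def by simp
qed

lemma reduction_eq:
  assumes "A \<subseteq> B" "\<forall>b\<in>B. \<exists>a\<in>A. b \<subseteq> a"
  shows "reduction A = reduction B"
proof (intro equalityI subsetI)
  fix x assume "x \<in> reduction A"
  then have x: "x \<in> A" "\<forall>y\<in>A. \<not> x \<subset> y" unfolding reduction_def by auto
  have "\<not> x \<subset> b" if b: "b \<in> B" for b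
  proof
    assume "x \<subset> b"
    obtain a where "a \<in> A" "b \<subseteq> a" using bspec[OF assms(2) b] ..
    with x(2) show False using psubset_subset_trans[OF \<open>x \<subset> b\<close>] by blast
  qed
  with x(1) assms(1) show "x \<in> reduction B" unfolding reduction_def by blast
next
  fix x assume "x \<in> reduction B"
  then have x: "x \<in> B" "\<forall>y\<in>B. \<not> x \<subset> y" unfolding reduction_def by auto
  obtain a where a: "a \<in> A" "x \<subseteq> a" using bspec[OF assms(2) x(1)] ..
  have "\<not> x \<subset> a" using x(2) a(1) assms(1) by blast
  then have "x = a" using psubsetI[OF a(2)] by blast
  with a x assms(1) show "x \<in> reduction A" unfolding reduction_def by blast
qed

lemma reduction_induced_reduction:
  assumes "finite E"
  shows "reduction (induced (reduction E) W) = reduction (induced E W)"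
proof (rule reduction_eq)
  show "induced (reduction E) W \<subseteq> induced E W"
    unfolding induced_def using reduction_subset by blast
  show "\<forall>b\<in>induced E W. \<exists>a\<in>induced (reduction E) W. b \<subseteq> a"
  proof
    fix b assume "b \<in> induced E W"
    then obtain e where e: "e \<in> E" "b = e \<inter> W" "b \<noteq> {}" unfolding induced_def by blast
    obtain e' where "e' \<in> reduction E" "e \<subseteq> e'" using reduction_above[OF assms e(1)] by blast
    with e have "e' \<inter> W \<in> induced (reduction E) W" "b \<subseteq> e' \<inter> W"
      unfolding induced_def by blast+
    then show "\<exists>a\<in>induced (reduction E) W. b \<subseteq> a" by blast
  qed
qed

definition component :: "'a set set \<Rightarrow> 'a \<Rightarrow> 'a set" where
  "component F v = (hg_adj F)\<^sup>+ `` {v}"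

lemma hg_adj_trancl_subset: "(hg_adj F)\<^sup>+ \<subseteq> \<Union>F \<times> \<Union>F"
  by (rule trancl_subset_Sigma) (auto simp: hg_adj_def)

lemma equiv_hg_adj_trancl: "equiv (\<Union>F) ((hg_adj F)\<^sup>+)"
proof (rule equivI[OF hg_adj_trancl_subset])
  show "refl_on (\<Union>F) ((hg_adj F)\<^sup>+)"
  proof (rule refl_onI)
    fix v assume "v \<in> \<Union>F"
    then have "(v, v) \<in> hg_adj F" unfolding hg_adj_def by blast
    then show "(v, v) \<in> (hg_adj F)\<^sup>+" ..
  qed
  show "sym ((hg_adj F)\<^sup>+)" by (rule sym_trancl) (auto simp: hg_adj_def sym_def)
qed (rule trans_trancl)

lemma component_subset: "component F v \<subseteq> \<Union>F"
  unfolding component_def using hg_adj_trancl_subset by blast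

lemma mem_component: "v \<in> \<Union>F \<Longrightarrow> v \<in> component F v"
  unfolding component_def using equiv_class_self[OF equiv_hg_adj_trancl] .

lemma edge_subset_or_disjoint_component:
  assumes "f \<in> F"
  shows "f \<subseteq> component F v \<or> f \<inter> component F v = {}"
proof (rule disjCI)
  assume "f \<inter> component F v \<noteq> {}"
  then obtain y where y: "y \<in> f" "(v, y) \<in> (hg_adj F)\<^sup>+" unfolding component_def by blast
  have "(y, z) \<in> hg_adj F" if "z \<in> f" for z
    using assms y(1) that unfolding hg_adj_def by blast
  then show "f \<subseteq> component F v"
    unfolding component_def using y(2) by (blast intro: trancl_into_trancl)
qed

lemma num_components_pos:
  assumes "finite (\<Union>F)" "v \<in> \<Union>F"
  shows "0 < num_components F"
proof -
  have "finite ((\<Union>F) // (hg_adj F)\<^sup>+)"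
    using finite_quotient[OF assms(1) hg_adj_trancl_subset] .
  moreover have "(\<Union>F) // (hg_adj F)\<^sup>+ \<noteq> {}"
    using quotientI[OF assms(2)] by (metis equals0D)
  ultimately show ?thesis unfolding num_components_def card_gt_0_iff by simp
qed

lemma two_components:
  assumes "1 < num_components F"
  obtains v y where "v \<in> \<Union>F" "y \<in> \<Union>F" "y \<notin> component F v"
proof -
  have "\<Union>F \<noteq> {}"
  proof
    assume "\<Union>F = {}"
    then have "num_components F = 0"
      unfolding num_components_def by (simp only: quotient_empty card.empty)
    with assms show False by simp
  qed
  then obtain v where v: "v \<in> \<Union>F" by blast
  have "\<exists>y\<in>\<Union>F. y \<notin> component F v"
  proof (rule ccontr)
    assume "\<not> ?thesis"
    then have "(hg_adj F)\<^sup>+ `` {y} = component F v" if "y \<in> \<Union>F" for y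
      using that equiv_class_eq_iff[OF equiv_hg_adj_trancl, of v y] unfolding component_def by auto
    then have "(\<Union>F) // (hg_adj F)\<^sup>+ = {component F v}"
      using v unfolding quotient_def by auto
    then show False using assms unfolding num_components_def by simp
  qed
  then show ?thesis using that v by blast
qed

lemma separation_of_components:
  assumes G: "finite G" and S: "S \<subseteq> \<Union>G"
    and nc: "1 < num_components (reduction (induced G (\<Union>G - S)))"
  obtains W1 W2 where "W1 \<subset> \<Union>G" "W2 \<subset> \<Union>G" "W1 \<inter> W2 \<subseteq> S" "\<forall>g\<in>G. g \<subseteq> W1 \<or> g \<subseteq> W2"
proof -
  define U where "U = \<Union>G - S"
  define G' where "G' = reduction (induced G U)"
  have fin: "finite (induced G U)" unfolding induced_def using G by simp
  have UG': "\<Union>G' \<subseteq> U"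
    unfolding G'_def induced_def using reduction_subset by blast
  obtain v y where v: "v \<in> \<Union>G'" and y: "y \<in> \<Union>G'" "y \<notin> component G' v"
    using nc two_components unfolding G'_def U_def by blast
  define C where "C = component G' v"
  have CU: "C \<subseteq> U" unfolding C_def using order_trans[OF component_subset UG'] .
  show ?thesis
  proof (rule that)
    show "C \<union> S \<subset> \<Union>G" using y UG' CU S unfolding C_def U_def by blast
    show "(U - C) \<union> S \<subset> \<Union>G"
      using mem_component[OF v] v UG' S unfolding C_def U_def by blast
    show "(C \<union> S) \<inter> ((U - C) \<union> S) \<subseteq> S" using CU unfolding U_def by blast
    show "\<forall>g\<in>G. g \<subseteq> C \<union> S \<or> g \<subseteq> (U - C) \<union> S"
    proof
      fix g assume g: "g \<in> G"
      show "g \<subseteq> C \<union> S \<or> g \<subseteq> (U - C) \<union> S"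
      proof (cases "g \<inter> U = {}")
        case False
        then have "g \<inter> U \<in> induced G U" unfolding induced_def using g by blast
        then obtain f where f: "f \<in> G'" "g \<inter> U \<subseteq> f"
          using reduction_above[OF fin] unfolding G'_def by blast
        have "f \<subseteq> U" using f(1) UG' by blast
        then show ?thesis
          using edge_subset_or_disjoint_component[OF f(1), of v] f(2) g
          unfolding C_def U_def by blast
      qed (use g in \<open>auto simp: U_def\<close>)
    qed
  qed
qed

lemma acyclic_separator:
  assumes E: "finite E" and ac: "hg_acyclic E" and W: "W \<subseteq> \<Union>E" "finite W"
    and G: "G = reduction (induced E W)" and card: "1 < card G"
  obtains P S where "P \<in> G" "S \<subseteq> P" "1 < num_components (reduction (induced G (\<Union>G - S)))"
proof (cases "hg_connected G")
  case True
  have "W \<subseteq> \<Union>(reduction E)" using W Union_reduction[OF E] by simp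
  then have "\<exists>S. articulation_set G S"
    using ac True card unfolding hg_acyclic_def acyclic_reduced_def G
    by (simp add: reduction_induced_reduction[OF E])
  then obtain P Q S where "P \<in> G" "S = P \<inter> Q"
    and "num_components G < num_components (reduction (induced G (\<Union>G - S)))"
    unfolding articulation_set_def by blast
  with True show ?thesis using that[of P S] unfolding hg_connected_def by simp
next
  case False
  have "finite (induced E W)" unfolding induced_def using E by simp
  then have fin: "finite G" unfolding G by (rule finite_subset[OF reduction_subset])
  have "G \<noteq> {}" using card by auto
  then obtain P where P: "P \<in> G" by blast
  have "\<Union>G \<subseteq> W" "{} \<notin> G"
    using reduction_subset[of "induced E W"] unfolding G induced_def by blast+
  then have "finite (\<Union>G)" "P \<noteq> {}" using finite_subset[OF _ W(2)] P by blast+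
  then obtain v where "v \<in> P" by blast
  then have "0 < num_components G"
    using num_components_pos[OF \<open>finite (\<Union>G)\<close> UnionI[OF P]] by blast
  moreover have "finite (induced G (\<Union>G))" unfolding induced_def using fin by simp
  then have "num_components (reduction (induced G (\<Union>G - {}))) = num_components G"
    by (simp add: num_components_reduction num_components_induced_Union)
  ultimately show ?thesis
    using False that[of P "{}"] P unfolding hg_connected_def by simp
qed

lemma acyclic_separation:
  assumes E: "finite E" and ac: "hg_acyclic E" and W: "W \<subseteq> \<Union>E" "finite W"
    and G: "G = reduction (induced E W)" and card: "1 < card G"
  obtains W1 W2 P where "P \<in> G" "W1 \<subset> \<Union>G" "W2 \<subset> \<Union>G" "W1 \<inter> W2 \<subseteq> P"
    "\<forall>g\<in>G. g \<subseteq> W1 \<or> g \<subseteq> W2"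
proof -
  obtain P S where PS: "P \<in> G" "S \<subseteq> P"
    and nc: "1 < num_components (reduction (induced G (\<Union>G - S)))"
    by (rule acyclic_separator[OF assms])
  have "finite (induced E W)" unfolding induced_def using E by simp
  then have "finite G" unfolding G by (rule finite_subset[OF reduction_subset])
  moreover have "S \<subseteq> \<Union>G" using PS by blast
  ultimately obtain W1 W2 where "W1 \<subset> \<Union>G" "W2 \<subset> \<Union>G" "W1 \<inter> W2 \<subseteq> S"
      "\<forall>g\<in>G. g \<subseteq> W1 \<or> g \<subseteq> W2"
    using nc by (rule separation_of_components)
  then show ?thesis using that[of P W1 W2] PS by blast
qed

section \<open>Running intersection orders of acyclic hypergraphs\<close>

lemma running_intersection_cong:
  "\<forall>i\<in>set L. e i = e' i \<Longrightarrow> running_intersection e L = running_intersection e' L"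
  unfolding running_intersection_def
  by (intro iff_allI imp_cong refl; simp; intro bex_cong refl; auto)

lemma running_intersection_Cons_dominant:
  "\<forall>i\<in>set L. e i \<subseteq> e c \<Longrightarrow> running_intersection e (c # L)"
  unfolding running_intersection_def by (auto simp: Cons_eq_append_conv)

lemma running_intersection_Cons_Cons_dominant:
  "\<forall>i\<in>set L. e i \<subseteq> e c \<Longrightarrow> running_intersection e (r # c # L)"
  unfolding running_intersection_def by (auto simp: Cons_eq_append_conv)

lemma running_intersection_restrict:
  assumes "running_intersection (\<lambda>i. e i \<inter> U) L" "distinct L" "\<forall>i\<in>set L. i \<noteq> p \<longrightarrow> e i \<subseteq> U"
  shows "running_intersection e L"
  using assms
proof (induction L rule: rev_induct)
  case (snoc x L)
  have "running_intersection e L"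
    using snoc.IH snoc.prems by (simp add: running_intersection_snoc)
  moreover have "\<exists>k\<in>set L. e x \<inter> \<Union>(e ` set L) \<subseteq> e k" if ne: "L \<noteq> []"
  proof -
    obtain k where k: "k \<in> set L" "e x \<inter> U \<inter> \<Union>((\<lambda>i. e i \<inter> U) ` set L) \<subseteq> e k \<inter> U"
      using snoc.prems(1) ne unfolding running_intersection_snoc by blast
    have "e x \<inter> \<Union>(e ` set L) \<subseteq> e x \<inter> U \<inter> \<Union>((\<lambda>i. e i \<inter> U) ` set L)"
    proof (cases "x = p")
      case True
      then have "\<forall>i\<in>set L. e i \<subseteq> U" using snoc.prems(2,3) by auto
      then show ?thesis by blast
    next
      case False
      then have "e x \<subseteq> U" using snoc.prems(3) by simp
      then show ?thesis by blast
    qed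
    with k show ?thesis by blast
  qed
  ultimately show ?case unfolding running_intersection_snoc by blast
qed (simp add: running_intersection_def)

lemma running_intersection_glue:
  assumes L1: "running_intersection (\<lambda>i. e i \<inter> U1) L1" "distinct L1" "p \<in> set L1"
      "\<forall>i\<in>set L1. i \<noteq> p \<longrightarrow> e i \<subseteq> U1"
    and L2: "running_intersection (\<lambda>i. e i \<inter> U2) (p # L2)" "\<forall>i\<in>set L2. e i \<subseteq> U2"
    and sep: "U1 \<inter> U2 \<subseteq> e p"
  shows "running_intersection e (L1 @ L2)"
  using L2
proof (induction L2 rule: rev_induct)
  case Nil
  then show ?case using running_intersection_restrict[OF L1(1,2,4)] by simp
next
  case (snoc x L2)
  have ri: "running_intersection (\<lambda>i. e i \<inter> U2) ((p # L2) @ [x])" using snoc.prems(1) by simp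
  then obtain k where k: "k \<in> set (p # L2)"
    "e x \<inter> U2 \<inter> \<Union>((\<lambda>i. e i \<inter> U2) ` set (p # L2)) \<subseteq> e k \<inter> U2"
    unfolding running_intersection_snoc by blast
  have "e x \<inter> \<Union>(e ` set (L1 @ L2)) \<subseteq> e k"
  proof
    fix y assume y: "y \<in> e x \<inter> \<Union>(e ` set (L1 @ L2))"
    then have "y \<in> U2" using snoc.prems(2) by auto
    obtain i where i: "i \<in> set (L1 @ L2)" "y \<in> e i" using y by blast
    have "y \<in> e p \<or> i \<in> set L2"
    proof (cases "i \<in> set L1 \<and> i \<noteq> p")
      case True
      then have "y \<in> U1" using L1(4) i(2) by blast
      then show ?thesis using sep \<open>y \<in> U2\<close> by blast
    qed (use i in auto)
    then have "y \<in> \<Union>(e ` set (p # L2))" using i(2) by auto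
    then show "y \<in> e k" using y \<open>y \<in> U2\<close> k(2) by blast
  qed
  moreover have "k \<in> set (L1 @ L2)" using k(1) L1(3) by auto
  moreover have "running_intersection e (L1 @ L2)"
    using snoc.IH ri snoc.prems(2) unfolding running_intersection_snoc by simp
  ultimately show ?case
    unfolding append_assoc[symmetric] running_intersection_snoc by blast
qed

definition rip_ordering_from :: "('i \<Rightarrow> 'a set) \<Rightarrow> 'i set \<Rightarrow> 'i \<Rightarrow> bool" where
  "rip_ordering_from e I r \<longleftrightarrow>
     (\<exists>L. distinct (r # L) \<and> set (r # L) = I \<and> running_intersection e (r # L))"

lemma rip_ordering_from_dominated:
  assumes "finite I" "r \<in> I" "c \<in> I" "\<forall>i\<in>I. e i \<subseteq> e c"
  shows "rip_ordering_from e I r"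
proof -
  obtain L where L: "set L = I - {r, c}" "distinct L"
    using finite_distinct_list[of "I - {r, c}"] assms(1) by blast
  show ?thesis
  proof (cases "r = c")
    case True
    then show ?thesis unfolding rip_ordering_from_def using assms L
      by (intro exI[of _ L]) (auto intro: running_intersection_Cons_dominant)
  next
    case False
    then show ?thesis unfolding rip_ordering_from_def using assms L
      by (intro exI[of _ "c # L"]) (auto intro: running_intersection_Cons_Cons_dominant)
  qed
qed

lemma rip_ordering_from_glue:
  assumes "rip_ordering_from (\<lambda>i. e i \<inter> U1) I1 r" "rip_ordering_from (\<lambda>i. e i \<inter> U2) I2 p"
    and "p \<in> I1" "I1 \<inter> I2 = {p}" "\<forall>i\<in>I1 - {p}. e i \<subseteq> U1" "\<forall>i\<in>I2 - {p}. e i \<subseteq> U2"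
    and "U1 \<inter> U2 \<subseteq> e p"
  shows "rip_ordering_from e (I1 \<union> I2) r"
proof -
  obtain L1 where L1: "distinct (r # L1)" "set (r # L1) = I1"
      "running_intersection (\<lambda>i. e i \<inter> U1) (r # L1)"
    using assms(1) unfolding rip_ordering_from_def by blast
  obtain L2 where L2: "distinct (p # L2)" "set (p # L2) = I2"
      "running_intersection (\<lambda>i. e i \<inter> U2) (p # L2)"
    using assms(2) unfolding rip_ordering_from_def by blast
  have "running_intersection e ((r # L1) @ L2)"
    using L1 L2 assms(3-7) by (intro running_intersection_glue[where p = p]) auto
  moreover have "distinct ((r # L1) @ L2)" "set ((r # L1) @ L2) = I1 \<union> I2"
    using L1 L2 assms(3,4) by auto
  ultimately show ?thesis unfolding rip_ordering_from_def by (intro exI[of _ "L1 @ L2"]) simp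
qed

(* I suffices to generate the reduced hypergraph induced on W.  The induction over W needs this
   weaker requirement on the index set, since each half of a separation sees only part of it. *)
definition covers :: "('i \<Rightarrow> 'a set) \<Rightarrow> 'i set \<Rightarrow> 'a set \<Rightarrow> 'i set \<Rightarrow> bool" where
  "covers e N W I \<longleftrightarrow> (\<forall>i\<in>N. \<exists>j\<in>I. e i \<inter> W \<subseteq> e j \<inter> W)"

lemma covers_subfamily:
  assumes "covers e N W I" "W' \<subseteq> W" "I' \<subseteq> I" "p \<in> I'" "\<forall>j\<in>I - I'. e j \<inter> W \<inter> W' \<subseteq> e p"
  shows "covers e N W' I'"
  unfolding covers_def
proof
  fix i assume "i \<in> N"
  then obtain j where j: "j \<in> I" "e i \<inter> W \<subseteq> e j \<inter> W" using assms(1) unfolding covers_def by blast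
  then have "e i \<inter> W' \<subseteq> e j \<inter> W'" using assms(2) by blast
  moreover have "e i \<inter> W' \<subseteq> e p \<inter> W'" if "j \<notin> I'" using that j assms(2,5) by blast
  ultimately show "\<exists>j\<in>I'. e i \<inter> W' \<subseteq> e j \<inter> W'" using j(1) assms(4) by blast
qed

lemma rip_ordering_from_separation:
  assumes IH1: "\<And>I r. I \<subseteq> N \<Longrightarrow> covers e N W1 I \<Longrightarrow> r \<in> I \<Longrightarrow> rip_ordering_from (\<lambda>i. e i \<inter> W1) I r"
    and IH2: "\<And>I r. I \<subseteq> N \<Longrightarrow> covers e N W2 I \<Longrightarrow> r \<in> I \<Longrightarrow> rip_ordering_from (\<lambda>i. e i \<inter> W2) I r"
    and W: "W1 \<subseteq> W" "W2 \<subseteq> W" and p: "p \<in> I" "W1 \<inter> W2 \<subseteq> e p"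
    and split: "\<forall>i\<in>N. e i \<inter> W \<subseteq> W1 \<or> e i \<inter> W \<subseteq> W2"
    and I: "I \<subseteq> N" "covers e N W I" "r \<in> I"
  shows "rip_ordering_from (\<lambda>i. e i \<inter> W) I r"
proof -
  \<comment> \<open>p, whose edge contains the overlap W1 \<inter> W2, belongs to both halves\<close>
  define I1 where "I1 = insert p {i \<in> I. e i \<inter> W \<subseteq> W1}"
  define I2 where "I2 = insert p {i \<in> I. \<not> e i \<inter> W \<subseteq> W1}"
  have "covers e N W1 I1"
    using I(1) p split by (intro covers_subfamily[OF I(2) W(1)]) (auto simp: I1_def)
  moreover have "(\<lambda>i. e i \<inter> W \<inter> W1) = (\<lambda>i. e i \<inter> W1)" using W(1) by auto
  moreover have "I1 \<subseteq> N" using I(1) p(1) unfolding I1_def by auto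
  ultimately have ord1: "rip_ordering_from (\<lambda>i. e i \<inter> W \<inter> W1) I1 q" if "q \<in> I1" for q
    using IH1 that by simp
  have "covers e N W2 I2"
    using p by (intro covers_subfamily[OF I(2) W(2)]) (auto simp: I2_def)
  moreover have "(\<lambda>i. e i \<inter> W \<inter> W2) = (\<lambda>i. e i \<inter> W2)" using W(2) by auto
  moreover have "I2 \<subseteq> N" using I(1) p(1) unfolding I2_def by auto
  ultimately have ord2: "rip_ordering_from (\<lambda>i. e i \<inter> W \<inter> W2) I2 q" if "q \<in> I2" for q
    using IH2 that by simp
  have parts: "p \<in> I1" "p \<in> I2" "I1 \<inter> I2 = {p}" "I1 \<union> I2 = I"
    "\<forall>i\<in>I1 - {p}. e i \<inter> W \<subseteq> W1" "\<forall>i\<in>I2 - {p}. e i \<inter> W \<subseteq> W2"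
    using p(1) split I(1) unfolding I1_def I2_def by auto
  show ?thesis
  proof (cases "r \<in> I1")
    case True
    then show ?thesis
      using rip_ordering_from_glue[OF ord1[OF True] ord2[OF parts(2)]] parts p(2) W by blast
  next
    case False
    then have "r \<in> I2" using I(3) parts(4) by blast
    moreover have "I2 \<inter> I1 = {p}" "W2 \<inter> W1 \<subseteq> e p \<inter> W" using parts(3) p(2) W by blast+
    ultimately have "rip_ordering_from (\<lambda>i. e i \<inter> W) (I2 \<union> I1) r"
      using rip_ordering_from_glue[OF ord2 ord1[OF parts(1)] parts(2)] parts(5,6) by blast
    then show ?thesis using parts(4) by (simp add: Un_commute)
  qed
qed

lemma reduction_induced_above:
  assumes "finite N" "i \<in> N" "e i \<inter> W \<noteq> {}"
  shows "\<exists>g\<in>reduction (induced (e ` N) W). e i \<inter> W \<subseteq> g"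
proof -
  have "finite (induced (e ` N) W)" unfolding induced_def using assms(1) by simp
  moreover have "e i \<inter> W \<in> induced (e ` N) W" unfolding induced_def using assms(2,3) by blast
  ultimately show ?thesis by (rule reduction_above)
qed

lemma covers_reduction_induced:
  assumes "covers e N W I" "I \<subseteq> N" "g \<in> reduction (induced (e ` N) W)"
  shows "\<exists>p\<in>I. e p \<inter> W = g"
proof -
  have g: "g \<in> induced (e ` N) W" "\<forall>h\<in>induced (e ` N) W. \<not> g \<subset> h"
    using assms(3) unfolding reduction_def by blast+
  then obtain i where i: "i \<in> N" "g = e i \<inter> W" "g \<noteq> {}" unfolding induced_def by blast
  then obtain p where p: "p \<in> I" "e i \<inter> W \<subseteq> e p \<inter> W"
    using assms(1) unfolding covers_def by blast
  have "e p \<inter> W \<in> induced (e ` N) W"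
    using p i assms(2) unfolding induced_def by blast
  then have "\<not> g \<subset> e p \<inter> W" using g(2) by blast
  then show ?thesis using p i(2) by blast
qed

lemma reduction_induced_split:
  assumes "finite N" "\<forall>g\<in>reduction (induced (e ` N) W). g \<subseteq> W1 \<or> g \<subseteq> W2"
  shows "\<forall>i\<in>N. e i \<inter> W \<subseteq> W1 \<or> e i \<inter> W \<subseteq> W2"
proof
  fix i assume "i \<in> N"
  show "e i \<inter> W \<subseteq> W1 \<or> e i \<inter> W \<subseteq> W2"
  proof (cases "e i \<inter> W = {}")
    case False
    then obtain g where "g \<in> reduction (induced (e ` N) W)" "e i \<inter> W \<subseteq> g"
      using reduction_induced_above[where e = e, OF assms(1) \<open>i \<in> N\<close> False] by blast
    then show ?thesis using assms(2) by blast
  qed simp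
qed

lemma covers_dominant:
  assumes "finite N" "covers e N W I" "I \<subseteq> N" "r \<in> I"
    and card: "card (reduction (induced (e ` N) W)) \<le> 1"
  obtains c where "c \<in> I" "\<forall>i\<in>N. e i \<inter> W \<subseteq> e c \<inter> W"
proof (cases "reduction (induced (e ` N) W) = {}")
  case True
  have "e i \<inter> W = {}" if "i \<in> N" for i
    using reduction_induced_above[OF assms(1) that, where e = e and W = W] True by blast
  then show ?thesis using that assms(4) by blast
next
  case False
  then obtain g where g: "g \<in> reduction (induced (e ` N) W)" by blast
  have "finite (induced (e ` N) W)" unfolding induced_def using assms(1) by simp
  then have "finite (reduction (induced (e ` N) W))" by (rule finite_subset[OF reduction_subset])
  then have "reduction (induced (e ` N) W) = {g}"
    using card card_le_Suc0_iff_eq g by auto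
  then have "e i \<inter> W \<subseteq> g" if "i \<in> N" for i
    using reduction_induced_above[OF assms(1) that, where e = e and W = W] by blast
  moreover obtain p where "p \<in> I" "e p \<inter> W = g"
    using covers_reduction_induced[OF assms(2,3) g] by blast
  ultimately show ?thesis using that[of p] by blast
qed

lemma rip_ordering_from_induced:
  fixes e :: "'i \<Rightarrow> 'a set"
  assumes N: "finite N" "finite (\<Union>(e ` N))" and ac: "hg_acyclic (e ` N)"
  shows "W \<subseteq> \<Union>(e ` N) \<Longrightarrow> I \<subseteq> N \<Longrightarrow> covers e N W I \<Longrightarrow> r \<in> I
           \<Longrightarrow> rip_ordering_from (\<lambda>i. e i \<inter> W) I r"
proof (induction "card W" arbitrary: W I r rule: less_induct)
  case less
  define G where "G = reduction (induced (e ` N) W)"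
  have finW: "finite W" using less.prems(1) N(2) by (rule finite_subset)
  show ?case
  proof (cases "card G \<le> 1")
    case True
    obtain c where c: "c \<in> I" "\<forall>i\<in>N. e i \<inter> W \<subseteq> e c \<inter> W"
      using covers_dominant[OF N(1) less.prems(3,2,4)] True unfolding G_def by blast
    have "finite I" using less.prems(2) N(1) by (rule finite_subset)
    then show ?thesis
      using rip_ordering_from_dominated[where e = "\<lambda>i. e i \<inter> W"] c less.prems(2,4) by blast
  next
    case False
    then have "1 < card G" by simp
    then obtain W1 W2 P where P: "P \<in> G" and W12: "W1 \<subset> \<Union>G" "W2 \<subset> \<Union>G" "W1 \<inter> W2 \<subseteq> P"
      and split: "\<forall>g\<in>G. g \<subseteq> W1 \<or> g \<subseteq> W2"
      by (rule acyclic_separation[OF finite_imageI[OF N(1)] ac less.prems(1) finW G_def])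
    obtain p where p: "p \<in> I" "e p \<inter> W = P"
      using covers_reduction_induced[OF less.prems(3,2)] P unfolding G_def by blast
    have "\<Union>G \<subseteq> W" unfolding G_def induced_def using reduction_subset by blast
    then have sub: "W1 \<subset> W" "W2 \<subset> W" using W12 by blast+
    have IH: "rip_ordering_from (\<lambda>i. e i \<inter> W') I' r'"
      if "W' \<subset> W" "I' \<subseteq> N" "covers e N W' I'" "r' \<in> I'" for W' I' r'
      using less.hyps[OF psubset_card_mono[OF finW that(1)]] that less.prems(1) by blast
    have split': "\<forall>i\<in>N. e i \<inter> W \<subseteq> W1 \<or> e i \<inter> W \<subseteq> W2"
      using reduction_induced_split[OF N(1)] split unfolding G_def by blast
    have sep: "W1 \<inter> W2 \<subseteq> e p" using W12(3) p(2) by blast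
    show ?thesis
      by (rule rip_ordering_from_separation[OF IH[OF sub(1)] IH[OF sub(2)]
            psubset_imp_subset[OF sub(1)] psubset_imp_subset[OF sub(2)] p(1) sep split'
            less.prems(2-4)])
  qed
qed

lemma acyclic_rip_ordering_from:
  fixes e :: "'i \<Rightarrow> 'a set"
  assumes "finite N" "finite (\<Union>(e ` N))" "hg_acyclic (e ` N)" "r \<in> N"
  shows "rip_ordering_from e N r"
proof -
  have "covers e N (\<Union>(e ` N)) N" unfolding covers_def by blast
  then have "rip_ordering_from (\<lambda>i. e i \<inter> \<Union>(e ` N)) N r"
    using rip_ordering_from_induced[OF assms(1-3)] assms(4) by blast
  then obtain L where L: "distinct (r # L)" "set (r # L) = N"
      "running_intersection (\<lambda>i. e i \<inter> \<Union>(e ` N)) (r # L)"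
    unfolding rip_ordering_from_def by blast
  have "\<forall>i\<in>set (r # L). e i \<inter> \<Union>(e ` N) = e i" using L(2) by blast
  then have "running_intersection e (r # L)"
    using L(3) running_intersection_cong[where e = "\<lambda>i. e i \<inter> \<Union>(e ` N)" and e' = e] by simp
  then show ?thesis unfolding rip_ordering_from_def using L(1,2) by blast
qed

lemma permutes_list_nth:
  assumes "distinct L" "set L = {..<m}"
  shows "(\<lambda>i. if i < m then L ! i else i) permutes {..<m}"
proof (rule bij_imp_permutes)
  have "length L = m" using distinct_card[OF assms(1)] assms(2) by simp
  then have "bij_betw ((!) L) {..<m} {..<m}" using bij_betw_nth[OF assms(1)] assms(2) by simp
  then show "bij_betw (\<lambda>i. if i < m then L ! i else i) {..<m} {..<m}"
    by (rule bij_betw_cong[THEN iffD1, rotated]) simp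
qed simp

lemma map_list_nth: "length L = m \<Longrightarrow> map (\<lambda>i. f (if i < m then L ! i else i)) [0..<m] = map f L"
  by (rule nth_equalityI) auto

theorem lemma12:
  fixes X :: "nat \<Rightarrow> 'a set" and m :: nat
  assumes "m \<ge> 1"
    and "\<forall>i<m. finite (X i)"
    and "hg_acyclic (X ` {..<m})"
  shows "\<exists>\<pi>. \<pi> permutes {..<m} \<and>
           (\<forall>(Dom :: 'a \<Rightarrow> 'd set) (R :: nat \<Rightarrow> ('a \<rightharpoonup> 'd) \<Rightarrow> 'k::positive_semiring).
              (\<forall>i<m. krel Dom (X i) (R i)) \<and> pairwise_consistent Dom m X R \<longrightarrow>
                globally_consistent Dom m X R \<and>
                global_witness Dom m X R
                  (iter_ljoin Dom (map (\<lambda>i. (X (\<pi> i), R (\<pi> i))) [0..<m])))"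
proof -
  have "rip_ordering_from X {..<m} 0"
    using assms by (intro acyclic_rip_ordering_from) auto
  then obtain L where L: "distinct L" "set L = {..<m}" "L \<noteq> []" "running_intersection X L"
    unfolding rip_ordering_from_def by blast
  define \<pi> where "\<pi> = (\<lambda>i. if i < m then L ! i else i)"
  have len: "length L = m" using distinct_card[OF L(1)] L(2) by simp
  show ?thesis
  proof (intro exI[of _ \<pi>] conjI allI impI)
    show "\<pi> permutes {..<m}" unfolding \<pi>_def by (rule permutes_list_nth[OF L(1,2)])
    fix Dom :: "'a \<Rightarrow> 'd set" and R :: "nat \<Rightarrow> ('a \<rightharpoonup> 'd) \<Rightarrow> 'k"
    assume "(\<forall>i<m. krel Dom (X i) (R i)) \<and> pairwise_consistent Dom m X R"
    then have "\<forall>i\<in>set L. krel Dom (X i) (R i)"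
      "\<forall>i\<in>set L. \<forall>j\<in>set L. i \<noteq> j \<longrightarrow> consistent Dom (X i) (R i) (X j) (R j)"
      using L(2) unfolding pairwise_consistent_def by auto
    from iter_ljoin_witness[OF L(3,4) this]
    show "global_witness Dom m X R (iter_ljoin Dom (map (\<lambda>i. (X (\<pi> i), R (\<pi> i))) [0..<m]))"
      using L(2) map_list_nth[OF len, of "\<lambda>i. (X i, R i)"]
      unfolding global_witness_def \<pi>_def by simp
    then show "globally_consistent Dom m X R" unfolding globally_consistent_def by blast
  qed
qed

end
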